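(* Let $(X,\{R_i\}_{i=0}^d)$ be a symmetric association scheme with adjacency matrices $A_0=I,\dots,A_d$ and intersection numbers $p_{ij}^k$, and let $W=\sum_{i=0}^dw_iA_i$ with $w_0=1$ be a complex Hadamard matrix. Let $\Delta\subseteq\{1,\dots,d\}$, and suppose there exists $i\in\{1,\dots,d\}$ such that $p_{i_1,j_1}^i>0$ for all $i_1,j_1\in\Delta$. Then \[ H_4(W)\supseteq\left\{\frac{w_{i_1}w_{i_2}}{w_{j_1}w_{j_2}}\;\middle|\;i_1,i_2,j_1,j_2\in\Delta\right\}\setminus\{1\}. \] In particular, if there exists $i\in\{1,\dots,d\}$ such that $p_{i_1,j_1}^i>0$ for all $i_1,j_1\in\{1,\dots,d\}$, then \[ H_4(W)\setminus\{1\}=\left\{\frac{w_{i_1}w_{i_2}}{w_{j_1}w_{j_2}}\;\middle|\;i_1,i_2,j_1,j_2\in\{1,\dots,d\}\right\}\setminus\{1\}. \]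
   Context: An association scheme $(X,\{R_i\}_{i=0}^d)$ is a partition of $X\times X$ into relations $R_0=\{(x,x)\}$, $R_1,\dots,R_d$ such that for $(x,y)\in R_k$ the number $p_{ij}^k=|\{z\in X:(x,z)\in R_i,(z,y)\in R_j\}|$ depends only on $i,j,k$; symmetric means each $R_i$ is symmetric. $A_i$ is the $(0,1)$-matrix of $R_i$. A complex Hadamard matrix is a square complex matrix $H$ of order $n=|X|$ with entries of absolute value $1$ and $HH^*=nI$. For $W$ indexed by $X$, \[ H_4(W)=\left\{\frac{W_{x_1,y_1}W_{x_2,y_2}}{W_{x_2,y_1}W_{x_1,y_2}}\;\middle|\;x_1,x_2,y_1,y_2\in X,\ |\{x_1,x_2,y_1,y_2\}|=4\right\}. \] *)

theory Defs
  imports Complex_Main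
begin

definition sym_assoc_scheme ::
  "'a set \<Rightarrow> nat \<Rightarrow> (nat \<Rightarrow> ('a \<times> 'a) set) \<Rightarrow> (nat \<Rightarrow> nat \<Rightarrow> nat \<Rightarrow> nat) \<Rightarrow> bool" where
  "sym_assoc_scheme X d R p \<longleftrightarrow>
     finite X \<and> X \<noteq> {} \<and>
     R 0 = Id_on X \<and>
     (\<forall>i\<le>d. R i \<subseteq> X \<times> X \<and> R i \<noteq> {}) \<and>
     (\<forall>i\<le>d. \<forall>j\<le>d. i \<noteq> j \<longrightarrow> R i \<inter> R j = {}) \<and>
     (\<Union>i\<le>d. R i) = X \<times> X \<and>
     (\<forall>i\<le>d. (R i)\<inverse> = R i) \<and>
     (\<forall>i\<le>d. \<forall>j\<le>d. \<forall>k\<le>d. \<forall>x y. (x, y) \<in> R k \<longrightarrow>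
        card {z \<in> X. (x, z) \<in> R i \<and> (z, y) \<in> R j} = p i j k)"

definition complex_hadamard :: "'a set \<Rightarrow> ('a \<Rightarrow> 'a \<Rightarrow> complex) \<Rightarrow> bool" where
  "complex_hadamard X W \<longleftrightarrow>
     (\<forall>x\<in>X. \<forall>y\<in>X. cmod (W x y) = 1) \<and>
     (\<forall>x\<in>X. \<forall>y\<in>X. (\<Sum>z\<in>X. W x z * cnj (W y z)) = (if x = y then of_nat (card X) else 0))"

definition H4 :: "'a set \<Rightarrow> ('a \<Rightarrow> 'a \<Rightarrow> complex) \<Rightarrow> complex set" where
  "H4 X W = {W x1 y1 * W x2 y2 / (W x2 y1 * W x1 y2) | x1 x2 y1 y2.
     x1 \<in> X \<and> x2 \<in> X \<and> y1 \<in> X \<and> y2 \<in> X \<and> card {x1, x2, y1, y2} = 4}"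

end

theory Submission
  imports Defs
begin

text \<open>Take (x, y) in the class R i. If p i1 j1 i and p j2 i2 i are positive there are points
  y1, y2 with (x, y1) \<in> R i1, (y, y1) \<in> R j1, (x, y2) \<in> R j2, (y, y2) \<in> R i2 (symmetry of the
  classes turns (y1, y) into (y, y1)). The 4-cycle x, y1, y, y2 then realises
  w i1 w i2 / (w j1 w j2) in H4(W); the four points are distinct because off-diagonal pairs
  lie in nontrivial classes, and y1 = y2 would force the quotient to be 1. Conversely every
  element of H4(W) is such a quotient, since its four entries come from off-diagonal pairs.\<close>

definition weight_ratios :: "(nat \<Rightarrow> complex) \<Rightarrow> nat set \<Rightarrow> complex set" where
  "weight_ratios w \<Delta> = {w i1 * w i2 / (w j1 * w j2) | i1 i2 j1 j2.
     i1 \<in> \<Delta> \<and> i2 \<in> \<Delta> \<and> j1 \<in> \<Delta> \<and> j2 \<in> \<Delta>}"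

lemma sym_assoc_schemeD:
  assumes "sym_assoc_scheme X d R p"
  shows "R 0 = Id_on X" "\<And>i. i \<le> d \<Longrightarrow> R i \<subseteq> X \<times> X" "\<And>i. i \<le> d \<Longrightarrow> R i \<noteq> {}"
    "\<And>i j. i \<le> d \<Longrightarrow> j \<le> d \<Longrightarrow> i \<noteq> j \<Longrightarrow> R i \<inter> R j = {}"
    "(\<Union>i\<le>d. R i) = X \<times> X" "\<And>i. i \<le> d \<Longrightarrow> (R i)\<inverse> = R i"
    "\<And>i j k x y. i \<le> d \<Longrightarrow> j \<le> d \<Longrightarrow> k \<le> d \<Longrightarrow> (x, y) \<in> R k \<Longrightarrow>
        card {z \<in> X. (x, z) \<in> R i \<and> (z, y) \<in> R j} = p i j k"
  using assms unfolding sym_assoc_scheme_def by simp_all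

lemma sym_assoc_scheme_off_diagonal_class:
  assumes scheme: "sym_assoc_scheme X d R p" and "x \<in> X" "y \<in> X" "x \<noteq> y"
  obtains k where "k \<in> {1..d}" "(x, y) \<in> R k"
proof -
  obtain k where k: "k \<le> d" "(x, y) \<in> R k"
    using sym_assoc_schemeD(5)[OF scheme] assms(2,3) by blast
  moreover have "k \<noteq> 0"
  proof
    assume "k = 0"
    then show False using k sym_assoc_schemeD(1)[OF scheme] \<open>x \<noteq> y\<close> by auto
  qed
  ultimately show thesis using that by (simp add: Suc_le_eq)
qed

lemma sym_assoc_scheme_class_off_diagonal:
  assumes scheme: "sym_assoc_scheme X d R p" and "k \<in> {1..d}" "(x, y) \<in> R k"
  shows "x \<noteq> y"
proof
  assume "x = y"
  moreover have "x \<in> X" using sym_assoc_schemeD(2)[OF scheme] assms by auto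
  ultimately have "(x, y) \<in> R 0" using sym_assoc_schemeD(1)[OF scheme] by auto
  then show False using sym_assoc_schemeD(4)[OF scheme, of 0 k] assms by auto
qed

lemma sym_assoc_scheme_intersection_point:
  assumes scheme: "sym_assoc_scheme X d R p"
    and "i \<le> d" "a \<le> d" "b \<le> d" "(x, y) \<in> R i" "p a b i > 0"
  obtains z where "z \<in> X" "(x, z) \<in> R a" "(z, y) \<in> R b"
proof -
  have "card {z \<in> X. (x, z) \<in> R a \<and> (z, y) \<in> R b} > 0"
    using sym_assoc_schemeD(7)[OF scheme assms(3,4,2,5)] assms(6) by simp
  then have "{z \<in> X. (x, z) \<in> R a \<and> (z, y) \<in> R b} \<noteq> {}" by force
  then show thesis using that by blast
qed

lemma weight_ratios_subset_H4:
  assumes scheme: "sym_assoc_scheme X d R p"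
    and W_w: "\<forall>i\<le>d. \<forall>x y. (x, y) \<in> R i \<longrightarrow> W x y = w i"
    and nonzero: "\<forall>x\<in>X. \<forall>y\<in>X. W x y \<noteq> 0"
    and \<Delta>: "\<Delta> \<subseteq> {1..d}" and i: "i \<in> {1..d}" and p_pos: "\<forall>a\<in>\<Delta>. \<forall>b\<in>\<Delta>. p a b i > 0"
  shows "weight_ratios w \<Delta> - {1} \<subseteq> H4 X W"
proof
  fix v assume "v \<in> weight_ratios w \<Delta> - {1}"
  then obtain i1 i2 j1 j2 where v: "v = w i1 * w i2 / (w j1 * w j2)" and "v \<noteq> 1"
    and idx: "i1 \<in> \<Delta>" "i2 \<in> \<Delta>" "j1 \<in> \<Delta>" "j2 \<in> \<Delta>"
    unfolding weight_ratios_def by blast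
  then have cls: "i1 \<in> {1..d}" "i2 \<in> {1..d}" "j1 \<in> {1..d}" "j2 \<in> {1..d}" using \<Delta> by auto
  have "i \<le> d" using i by simp
  obtain x y where xy: "(x, y) \<in> R i" using sym_assoc_schemeD(3)[OF scheme \<open>i \<le> d\<close>] by auto
  have "x \<in> X" "y \<in> X" using xy sym_assoc_schemeD(2)[OF scheme \<open>i \<le> d\<close>] by auto
  obtain y1 where y1: "y1 \<in> X" "(x, y1) \<in> R i1" "(y1, y) \<in> R j1"
    using sym_assoc_scheme_intersection_point[OF scheme \<open>i \<le> d\<close> _ _ xy, of i1 j1] cls p_pos idx
    by auto
  obtain y2 where y2: "y2 \<in> X" "(x, y2) \<in> R j2" "(y2, y) \<in> R i2"
    using sym_assoc_scheme_intersection_point[OF scheme \<open>i \<le> d\<close> _ _ xy, of j2 i2] cls p_pos idx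
    by auto
  have "(y, y1) \<in> R j1" "(y, y2) \<in> R i2"
    using y1(3) y2(3) sym_assoc_schemeD(6)[OF scheme] cls by auto
  note pairs = xy y1(2) y2(2) this
  have W_vals: "W x y1 = w i1" "W y y1 = w j1" "W x y2 = w j2" "W y y2 = w i2"
    using W_w pairs cls by auto
  have v_W: "v = W x y1 * W y y2 / (W y y1 * W x y2)" using v W_vals by simp
  have "y1 \<noteq> y2"
  proof
    assume "y1 = y2"
    then have "v = W x y1 * W y y1 / (W y y1 * W x y1)" using v_W by simp
    also have "\<dots> = 1" using nonzero \<open>x \<in> X\<close> \<open>y \<in> X\<close> y1(1) by simp
    finally show False using \<open>v \<noteq> 1\<close> by simp
  qed
  moreover have "x \<noteq> y" "x \<noteq> y1" "y \<noteq> y1" "x \<noteq> y2" "y \<noteq> y2"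
    using sym_assoc_scheme_class_off_diagonal[OF scheme] i cls pairs by blast+
  ultimately have "card {x, y, y1, y2} = 4" by auto
  then show "v \<in> H4 X W"
    unfolding H4_def using v_W \<open>x \<in> X\<close> \<open>y \<in> X\<close> y1(1) y2(1) by blast
qed

lemma H4_subset_weight_ratios:
  assumes scheme: "sym_assoc_scheme X d R p"
    and W_w: "\<forall>i\<le>d. \<forall>x y. (x, y) \<in> R i \<longrightarrow> W x y = w i"
  shows "H4 X W \<subseteq> weight_ratios w {1..d}"
proof
  fix v assume "v \<in> H4 X W"
  then obtain x1 x2 y1 y2 where v: "v = W x1 y1 * W x2 y2 / (W x2 y1 * W x1 y2)"
    and X: "x1 \<in> X" "x2 \<in> X" "y1 \<in> X" "y2 \<in> X" and "card {x1, x2, y1, y2} = 4"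
    unfolding H4_def by blast
  then have "x1 \<noteq> y1" "x2 \<noteq> y2" "x2 \<noteq> y1" "x1 \<noteq> y2"
    using card_distinct[of "[x1, x2, y1, y2]"] by auto
  then obtain a b e f where
    "a \<in> {1..d}" "(x1, y1) \<in> R a" "b \<in> {1..d}" "(x2, y2) \<in> R b"
    "e \<in> {1..d}" "(x2, y1) \<in> R e" "f \<in> {1..d}" "(x1, y2) \<in> R f"
    using sym_assoc_scheme_off_diagonal_class[OF scheme] X by metis
  moreover from this have "v = w a * w b / (w e * w f)" using v W_w by auto
  ultimately show "v \<in> weight_ratios w {1..d}" unfolding weight_ratios_def by blast
qed

theorem lemma5p2:
  fixes X :: "'a set" and d :: nat and R :: "nat \<Rightarrow> ('a \<times> 'a) set"
    and p :: "nat \<Rightarrow> nat \<Rightarrow> nat \<Rightarrow> nat"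
    and w :: "nat \<Rightarrow> complex" and W :: "'a \<Rightarrow> 'a \<Rightarrow> complex"
  assumes scheme: "sym_assoc_scheme X d R p"
    and W_def: "\<forall>i\<le>d. \<forall>x y. (x, y) \<in> R i \<longrightarrow> W x y = w i"
    and w0: "w 0 = 1"
    and hadamard: "complex_hadamard X W"
  shows "(\<forall>\<Delta> \<subseteq> {1..d}. (\<exists>i\<in>{1..d}. \<forall>i1\<in>\<Delta>. \<forall>j1\<in>\<Delta>. p i1 j1 i > 0) \<longrightarrow>
            {w i1 * w i2 / (w j1 * w j2) | i1 i2 j1 j2.
               i1 \<in> \<Delta> \<and> i2 \<in> \<Delta> \<and> j1 \<in> \<Delta> \<and> j2 \<in> \<Delta>} - {1} \<subseteq> H4 X W)
       \<and> ((\<exists>i\<in>{1..d}. \<forall>i1\<in>{1..d}. \<forall>j1\<in>{1..d}. p i1 j1 i > 0) \<longrightarrow>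
            H4 X W - {1} = {w i1 * w i2 / (w j1 * w j2) | i1 i2 j1 j2.
               i1 \<in> {1..d} \<and> i2 \<in> {1..d} \<and> j1 \<in> {1..d} \<and> j2 \<in> {1..d}} - {1})"
proof -
  have nonzero: "\<forall>x\<in>X. \<forall>y\<in>X. W x y \<noteq> 0"
    using hadamard unfolding complex_hadamard_def by (metis norm_zero zero_neq_one)
  note contained = weight_ratios_subset_H4[OF scheme W_def nonzero]
  have "H4 X W - {1} = weight_ratios w {1..d} - {1}"
    if "\<exists>i\<in>{1..d}. \<forall>a\<in>{1..d}. \<forall>b\<in>{1..d}. p a b i > 0"
    using that contained[OF order_refl] H4_subset_weight_ratios[OF scheme W_def] by blast
  moreover have "weight_ratios w \<Delta> - {1} \<subseteq> H4 X W"
    if "\<Delta> \<subseteq> {1..d}" "\<exists>i\<in>{1..d}. \<forall>a\<in>\<Delta>. \<forall>b\<in>\<Delta>. p a b i > 0" for \<Delta>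
    using that contained by blast
  ultimately show ?thesis unfolding weight_ratios_def by blast
qed

end
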